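(* Let $k$ be a positive integer, $A\subseteq[k]$, and let $c_\alpha\in\mathbb{Z}$ for each $\alpha\in A$. Suppose that for all pairs $\alpha,\alpha'\in A$: (1) $\mathrm{lcm}(\alpha,\alpha')\in A$, and (2) $(c_{\alpha'}-c_\alpha)\cdot\mathrm{lcm}(\alpha,\alpha')\equiv 0\pmod k$. Then there exists $c\in\mathbb{Z}$ such that $(c-c_\alpha)\alpha\equiv 0\pmod k$ for all $\alpha\in A$.
   Context: $[k]=\{1,\dots,k\}$. *)

theory Defs
  imports Main "HOL-Number_Theory.Cong"
begin

end

theory Submission
  imports Defs "HOL-Computational_Algebra.Factorial_Ring"
begin

text \<open>
  Writing \<open>m\<^sub>a = k div gcd k a\<close>, the condition \<open>(c\<^sub>0 - c\<^sub>a) a \<equiv> 0 (mod k)\<close>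
  says exactly \<open>c\<^sub>0 \<equiv> c\<^sub>a (mod m\<^sub>a)\<close>. So we need a simultaneous solution of
  finitely many congruences whose moduli need not be coprime, and by the general Chinese
  remainder theorem such a solution exists as soon as the congruences are pairwise
  compatible, \<open>c\<^sub>a \<equiv> c\<^sub>b (mod gcd m\<^sub>a m\<^sub>b)\<close>. This compatibility follows from the
  hypothesis on \<open>lcm a b\<close>, because \<open>gcd m\<^sub>a m\<^sub>b\<close> divides \<open>k div gcd k (lcm a b)\<close>.
\<close>

lemma binary_chinese_remainder_gcd_int:
  fixes m n u v :: int
  assumes "[u = v] (mod gcd m n)"
  shows "\<exists>x. [x = u] (mod m) \<and> [x = v] (mod n)"
proof -
  obtain q where q: "v - u = gcd m n * q"
    using cong_sym[OF assms] unfolding cong_iff_dvd_diff by (elim dvdE)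
  obtain s t where st: "s * m + t * n = gcd m n"
    using bezout_int by blast
  define x where "x = u + s * m * q"
  have "x - u = m * (s * q)"
    unfolding x_def by (simp add: algebra_simps)
  moreover have "x - v = n * (- t * q)"
    unfolding x_def using q st[symmetric] by (simp add: algebra_simps)
  ultimately show ?thesis
    by (metis cong_iff_dvd_diff dvd_triv_left)
qed

lemma gcd_Lcm_image_dvd:
  fixes m :: "'a \<Rightarrow> 'b::factorial_semiring_gcd"
  assumes "finite S" "\<And>a. a \<in> S \<Longrightarrow> gcd (m a) n dvd e"
  shows "gcd (Lcm (m ` S)) n dvd e"
  using assms
proof (induction S rule: finite_induct)
  case empty
  then show ?case by simp
next
  case (insert b S)
  have "gcd (Lcm (m ` insert b S)) n = lcm (gcd n (m b)) (gcd n (Lcm (m ` S)))"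
    by (simp add: gcd.commute gcd_lcm_distrib)
  with insert show ?case
    by (simp add: gcd.commute)
qed

lemma chinese_remainder_gcd_int:
  fixes m r :: "'a \<Rightarrow> int"
  assumes "finite S"
    and "\<And>a b. a \<in> S \<Longrightarrow> b \<in> S \<Longrightarrow> [r a = r b] (mod gcd (m a) (m b))"
  shows "\<exists>x. \<forall>a\<in>S. [x = r a] (mod m a)"
  using assms
proof (induction S rule: finite_induct)
  case empty
  then show ?case by simp
next
  case (insert b S)
  then obtain x where x: "\<And>a. a \<in> S \<Longrightarrow> [x = r a] (mod m a)"
    by auto
  have "[x = r b] (mod gcd (m a) (m b))" if "a \<in> S" for a
  proof -
    have "[x = r a] (mod gcd (m a) (m b))"
      using x[OF that] by (rule cong_dvd_modulus) simp
    moreover have "[r a = r b] (mod gcd (m a) (m b))"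
      using insert.prems that by simp
    ultimately show ?thesis
      by (rule cong_trans)
  qed
  then have "gcd (Lcm (m ` S)) (m b) dvd x - r b"
    by (intro gcd_Lcm_image_dvd[OF insert.hyps(1)]) (simp add: cong_iff_dvd_diff)
  then have "[x = r b] (mod gcd (Lcm (m ` S)) (m b))"
    by (simp add: cong_iff_dvd_diff)
  then obtain y where y: "[y = x] (mod Lcm (m ` S))" "[y = r b] (mod m b)"
    using binary_chinese_remainder_gcd_int by blast
  have "[y = r a] (mod m a)" if "a \<in> S" for a
  proof -
    have "[y = x] (mod m a)"
      using y(1) by (rule cong_dvd_modulus) (simp add: that)
    then show ?thesis
      using x[OF that] by (rule cong_trans)
  qed
  with y(2) show ?case
    by auto
qed

lemma dvd_mult_iff_div_gcd_dvd:
  fixes k a z :: "'a::semiring_gcd"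
  assumes "k \<noteq> 0"
  shows "k dvd z * a \<longleftrightarrow> k div gcd k a dvd z"
proof -
  define g where "g = gcd k a"
  have "g \<noteq> 0"
    using assms by (simp add: g_def)
  have k: "k = g * (k div g)" and a: "a = g * (a div g)"
    by (simp_all add: g_def)
  have "coprime (k div g) (a div g)"
    using assms by (simp add: g_def div_gcd_coprime)
  have "k dvd z * a \<longleftrightarrow> g * (k div g) dvd g * (z * (a div g))"
    by (subst k, subst a) (simp add: ac_simps)
  also have "\<dots> \<longleftrightarrow> k div g dvd z * (a div g)"
    using \<open>g \<noteq> 0\<close> by simp
  also have "\<dots> \<longleftrightarrow> k div g dvd z"
    using \<open>coprime (k div g) (a div g)\<close> by (rule coprime_dvd_mult_left_iff)
  finally show ?thesis
    by (simp add: g_def)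
qed

lemma gcd_div_gcd_dvd_div_gcd_lcm:
  fixes k a b :: "'a::{factorial_ring_gcd, semiring_gcd_mult_normalize}"
  assumes "k \<noteq> 0"
  shows "gcd (k div gcd k a) (k div gcd k b) dvd k div gcd k (lcm a b)"
proof -
  define d where "d = gcd (k div gcd k a) (k div gcd k b)"
  have "d * gcd k a dvd k" "d * gcd k b dvd k"
    unfolding d_def using assms by (simp_all flip: dvd_div_iff_mult)
  then have "lcm (d * gcd k a) (d * gcd k b) dvd k"
    by (rule lcm_least)
  moreover have "lcm (d * gcd k a) (d * gcd k b) = d * gcd k (lcm a b)"
    using lcm_mult_distrib'[of d "gcd k a" "gcd k b"] by (simp add: d_def gcd_lcm_distrib)
  ultimately have "d * gcd k (lcm a b) dvd k"
    by (simp only:)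
  then show ?thesis
    using assms unfolding d_def by (subst dvd_div_iff_mult) auto
qed

theorem lemma3p10:
  fixes k :: nat and A :: "nat set" and c :: "nat \<Rightarrow> int"
  assumes "k > 0"
    and "A \<subseteq> {1..k}"
    and "\<And>a a'. a \<in> A \<Longrightarrow> a' \<in> A \<Longrightarrow> lcm a a' \<in> A"
    and "\<And>a a'. a \<in> A \<Longrightarrow> a' \<in> A \<Longrightarrow>
           [(c a' - c a) * int (lcm a a') = 0] (mod int k)"
  shows "\<exists>c0 :: int. \<forall>a \<in> A. [(c0 - c a) * int a = 0] (mod int k)"
proof -
  define m where "m a = int k div gcd (int k) (int a)" for a
  have k_nonzero: "int k \<noteq> 0"
    using assms(1) by simp
  have "[c a = c b] (mod gcd (m a) (m b))" if "a \<in> A" "b \<in> A" for a b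
  proof -
    have "int k dvd (c b - c a) * lcm (int a) (int b)"
      using assms(4)[OF that] by (simp add: cong_0_iff)
    then have "int k div gcd (int k) (lcm (int a) (int b)) dvd c b - c a"
      using dvd_mult_iff_div_gcd_dvd[OF k_nonzero] by blast
    then have "gcd (m a) (m b) dvd c b - c a"
      unfolding m_def using gcd_div_gcd_dvd_div_gcd_lcm[OF k_nonzero] by (rule dvd_trans[rotated])
    then show ?thesis
      by (simp add: cong_iff_dvd_diff dvd_diff_commute)
  qed
  \<comment> \<open>Only finiteness of \<open>A\<close> is used below.\<close>
  moreover have "finite A"
    using assms(2) finite_subset by blast
  ultimately obtain c0 where "\<forall>a\<in>A. [c0 = c a] (mod m a)"
    using chinese_remainder_gcd_int by metis
  then have "\<forall>a\<in>A. [(c0 - c a) * int a = 0] (mod int k)"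
    using k_nonzero by (simp add: m_def cong_iff_dvd_diff cong_0_iff dvd_mult_iff_div_gcd_dvd)
  then show ?thesis ..
qed

end
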